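(* Let $F:\mathbb{R}^n\to\mathbb{R}$ be a convex differentiable function with a minimizer $x_*$, let $\xi^{(1)},\dots,\xi^{(T)}$ be i.i.d. random variables, let $\mu_x,\mu_y\in[0,1)$ be fixed, and let $z^{(1)},\dots,z^{(T)}$ be (random) iterates produced by a base optimizer, with $x^{(1)}=z^{(1)}$, $y^{(t)}=\mu_y x^{(t)}+(1-\mu_y)z^{(t)}$, $x^{(t+1)}=\mu_x x^{(t)}+(1-\mu_x)z^{(t+1)}$, and $\bar{x}^{(T)}=\frac1T\sum_{t=1}^T x^{(t)}$. Assume the base optimizer satisfies the regret guarantee $\sum_{t=1}^T\mathbb{E}[\langle\nabla F(y^{(t)}),z^{(t)}-x_*\rangle]=\mathcal{O}(\sqrt{T})$. Then $$\mathbb{E}[F(\bar{x}^{(T)})-F(x_* )]=\mathcal{O}\Big(\frac{1}{\sqrt T}\Big).$$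
   Context: This is the Generalized Primal Averaging (GPA) framework applied on top of an arbitrary base optimizer generating $z^{(t)}$; $\mathbb{E}[F(x^{(1)})-F(x_* )]$ is assumed finite and $\mu_x,\mu_y$ do not depend on $T$. *)

theory Defs
  imports "HOL-Probability.Probability" "HOL-Library.Landau_Symbols"
begin

text \<open>Generalized Primal Averaging, with the paper's 1-based indexing.
  The base iterates are z 1, z 2, ...; x 1 = z 1 and
  x (t+1) = mu_x x t + (1 - mu_x) z (t+1).  The value at index 0 is a dummy.\<close>

fun gpa_x :: "real \<Rightarrow> (nat \<Rightarrow> 'v::real_vector) \<Rightarrow> nat \<Rightarrow> 'v" where
  "gpa_x mu z 0 = z 1"
| "gpa_x mu z (Suc 0) = z 1"
| "gpa_x mu z (Suc (Suc t)) = mu *\<^sub>R gpa_x mu z (Suc t) + (1 - mu) *\<^sub>R z (Suc (Suc t))"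

definition gpa_y :: "real \<Rightarrow> real \<Rightarrow> (nat \<Rightarrow> 'v::real_vector) \<Rightarrow> nat \<Rightarrow> 'v" where
  "gpa_y mux muy z t = muy *\<^sub>R gpa_x mux z t + (1 - muy) *\<^sub>R z t"

definition gpa_xbar :: "real \<Rightarrow> (nat \<Rightarrow> 'v::real_vector) \<Rightarrow> nat \<Rightarrow> 'v" where
  "gpa_xbar mu z T = (1 / real T) *\<^sub>R (\<Sum>t = 1..T. gpa_x mu z t)"

end

theory Submission
  imports Defs
begin

text \<open>Put \<open>\<lambda> = (1 - \<mu>\<^sub>x) / (1 - \<mu>\<^sub>x \<mu>\<^sub>y)\<close>. Then \<open>x\<^sub>t = (1 - \<lambda>) x\<^sub>t\<^sub>-\<^sub>1 + \<lambda> y\<^sub>t\<close>,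
  so convexity of \<open>F\<close> on this segment, together with the gradient inequality at \<open>y\<^sub>t\<close>
  tested against \<open>x\<^sub>*\<close> and \<open>x\<^sub>t\<^sub>-\<^sub>1\<close>, gives the one-step bound
  \<open>(F(x\<^sub>t) - F(x\<^sub>*)) - \<mu>\<^sub>x (F(x\<^sub>t\<^sub>-\<^sub>1) - F(x\<^sub>*)) \<le> (1 - \<mu>\<^sub>x) \<langle>\<nabla>F(y\<^sub>t), z\<^sub>t - x\<^sub>*\<rangle>\<close>.
  Summing over \<open>t\<close> telescopes, and Jensen's inequality for the average \<open>xbar\<^sub>T\<close> yields the pathwise
  bound \<open>F(xbar\<^sub>T) - F(x\<^sub>*) \<le> (\<Sum>\<^sub>t \<langle>\<nabla>F(y\<^sub>t), z\<^sub>t - x\<^sub>*\<rangle> + \<mu>\<^sub>x/(1 - \<mu>\<^sub>x) (F(z\<^sub>1) - F(x\<^sub>*))) / T\<close>.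
  In expectation the regret sum is \<open>O(\<surd>T)\<close> and the initial gap is a constant.\<close>

lemma convex_on_restrict_to_line:
  fixes F :: "'v::real_vector \<Rightarrow> real"
  assumes "convex_on UNIV F"
  shows "convex_on UNIV (\<lambda>s::real. F (x + s *\<^sub>R v))"
proof (rule convex_onI)
  fix t u w :: real
  assume "0 < t" "t < 1"
  have "x + ((1 - t) *\<^sub>R u + t *\<^sub>R w) *\<^sub>R v = (1 - t) *\<^sub>R (x + u *\<^sub>R v) + t *\<^sub>R (x + w *\<^sub>R v)"
    by (simp add: algebra_simps)
  then show "F (x + ((1 - t) *\<^sub>R u + t *\<^sub>R w) *\<^sub>R v) \<le> (1 - t) * F (x + u *\<^sub>R v) + t * F (x + w *\<^sub>R v)"
    using convex_onD[OF assms] \<open>0 < t\<close> \<open>t < 1\<close> by simp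
qed simp

lemma convex_on_gradient_inequality:
  fixes F :: "'v::real_inner \<Rightarrow> real"
  assumes "convex_on UNIV F"
    and "(F has_derivative (\<lambda>h. g \<bullet> h)) (at x)"
  shows "F x + g \<bullet> (y - x) \<le> F y"
proof -
  define \<phi> where "\<phi> = (\<lambda>s::real. F (x + s *\<^sub>R (y - x)))"
  have "((\<lambda>s. x + s *\<^sub>R (y - x)) has_derivative (\<lambda>s. s *\<^sub>R (y - x))) (at 0)"
    by (auto intro!: derivative_eq_intros)
  moreover have "(F has_derivative (\<lambda>h. g \<bullet> h)) (at (x + 0 *\<^sub>R (y - x)))"
    using assms(2) by simp
  ultimately have "(\<phi> has_derivative (\<lambda>s. g \<bullet> (s *\<^sub>R (y - x)))) (at 0)"
    unfolding \<phi>_def by (rule has_derivative_compose[unfolded o_def])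
  then have "(\<phi> has_field_derivative (g \<bullet> (y - x))) (at 0)"
    by (simp add: has_field_derivative_def mult.commute[of _ "g \<bullet> (y - x)"])
  then have "(g \<bullet> (y - x)) * (1 - 0) \<le> \<phi> 1 - \<phi> 0"
    using convex_on_restrict_to_line[OF assms(1)]
    by (intro convex_on_imp_above_tangent) (auto simp: \<phi>_def)
  then show ?thesis
    by (simp add: \<phi>_def)
qed

lemma gpa_x_Suc:
  "gpa_x mu z (Suc t) = mu *\<^sub>R gpa_x mu z t + (1 - mu) *\<^sub>R z (Suc t)"
  by (cases t) (simp_all add: algebra_simps)

lemma gpa_step_bound:
  fixes F :: "'v::real_inner \<Rightarrow> real"
  assumes convex: "convex_on UNIV F"
    and subgradient: "\<And>v. F y + g \<bullet> (v - y) \<le> F v"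
    and mu: "0 \<le> mux" "mux < 1" "0 \<le> muy" "muy < 1"
    and x: "x = mux *\<^sub>R p + (1 - mux) *\<^sub>R w"
    and y: "y = muy *\<^sub>R x + (1 - muy) *\<^sub>R w"
  shows "F x - F xs - mux * (F p - F xs) \<le> (1 - mux) * (g \<bullet> (w - xs))"
proof -
  define D where "D = 1 - mux * muy"
  define lam where "lam = (1 - mux) / D"
  have muxy_le: "mux * muy \<le> mux"
    using mu mult_left_le[of muy mux] by simp
  then have D_pos: "0 < D"
    using mu by (simp add: D_def)
  have lam_range: "0 \<le> lam" "lam \<le> 1"
    using D_pos muxy_le mu by (auto simp: lam_def D_def)
  have lam_D: "lam * D = 1 - mux"
    using D_pos by (simp add: lam_def)
  have y_pw: "y = (mux * muy) *\<^sub>R p + D *\<^sub>R w"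
    by (simp add: y x D_def algebra_simps)
  have "(1 - lam) *\<^sub>R p + lam *\<^sub>R y = (1 - lam * D) *\<^sub>R p + (lam * D) *\<^sub>R w"
    by (simp add: y_pw D_def algebra_simps)
  then have "x = (1 - lam) *\<^sub>R p + lam *\<^sub>R y"
    by (simp add: lam_D x)
  then have convexity: "F x \<le> (1 - lam) * F p + lam * F y"
    using convex_onD[OF convex, of lam p y] lam_range by simp
  have "D *\<^sub>R (w - xs) = D *\<^sub>R (y - xs) + (mux * muy) *\<^sub>R (y - p)"
    by (simp add: y_pw D_def algebra_simps)
  then have "D * (g \<bullet> (w - xs)) = D * (g \<bullet> (y - xs)) + (mux * muy) * (g \<bullet> (y - p))"
    by (metis inner_add_right inner_scaleR_right)
  also have "\<dots> \<ge> D * (F y - F xs) + (mux * muy) * (F y - F p)"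
    using subgradient[of xs] subgradient[of p] D_pos mu
    by (intro add_mono mult_left_mono) (auto simp: inner_diff_right)
  finally have "lam * (D * (F y - F xs) + (mux * muy) * (F y - F p)) \<le> lam * (D * (g \<bullet> (w - xs)))"
    using lam_range by (intro mult_left_mono)
  moreover have "lam * (mux * muy) = lam - (1 - mux)"
    using lam_D by (simp add: D_def algebra_simps)
  ultimately have "(1 - mux) * (F y - F xs) + (lam - (1 - mux)) * (F y - F p) \<le> (1 - mux) * (g \<bullet> (w - xs))"
    by (simp add: distrib_left flip: mult.assoc lam_D)
  with convexity show ?thesis
    by (simp add: algebra_simps)
qed

lemma gpa_telescoped_bound:
  fixes F :: "'v::real_inner \<Rightarrow> real" and z :: "nat \<Rightarrow> 'v"
  assumes convex: "convex_on UNIV F"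
    and subgradient: "\<And>x v. F x + g x \<bullet> (v - x) \<le> F v"
    and mu: "0 \<le> mux" "mux < 1" "0 \<le> muy" "muy < 1"
  shows "(1 - mux) * (\<Sum>t = 1..T. F (gpa_x mux z t) - F xs) + mux * (F (gpa_x mux z T) - F xs)
    \<le> (1 - mux) * (\<Sum>t = 1..T. g (gpa_y mux muy z t) \<bullet> (z t - xs)) + mux * (F (z 1) - F xs)"
proof (induction T)
  case 0
  then show ?case by simp
next
  case (Suc T)
  have "F (gpa_x mux z (Suc T)) - F xs - mux * (F (gpa_x mux z T) - F xs)
    \<le> (1 - mux) * (g (gpa_y mux muy z (Suc T)) \<bullet> (z (Suc T) - xs))"
    using convex subgradient mu gpa_x_Suc gpa_y_def by (rule gpa_step_bound)
  with Suc.IH show ?case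
    by (simp add: algebra_simps)
qed

lemma gpa_xbar_gap_le:
  fixes F :: "'v::real_inner \<Rightarrow> real" and z :: "nat \<Rightarrow> 'v"
  assumes convex: "convex_on UNIV F"
    and subgradient: "\<And>x v. F x + g x \<bullet> (v - x) \<le> F v"
    and minimizer: "\<And>x. F xs \<le> F x"
    and mu: "0 \<le> mux" "mux < 1" "0 \<le> muy" "muy < 1"
    and "1 \<le> T"
  shows "F (gpa_xbar mux z T) - F xs
    \<le> ((\<Sum>t = 1..T. g (gpa_y mux muy z t) \<bullet> (z t - xs)) + mux / (1 - mux) * (F (z 1) - F xs)) / real T"
proof -
  define R where "R = (\<Sum>t = 1..T. g (gpa_y mux muy z t) \<bullet> (z t - xs))"
  define A where "A = (\<Sum>t = 1..T. F (gpa_x mux z t) - F xs)"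
  have "(1 - mux) * A + mux * (F (gpa_x mux z T) - F xs) \<le> (1 - mux) * R + mux * (F (z 1) - F xs)"
    unfolding A_def R_def by (rule gpa_telescoped_bound[OF convex subgradient mu])
  moreover have "0 \<le> mux * (F (gpa_x mux z T) - F xs)"
    using mu minimizer by simp
  moreover have "(1 - mux) * (R + mux / (1 - mux) * (F (z 1) - F xs)) = (1 - mux) * R + mux * (F (z 1) - F xs)"
    using mu by (simp add: distrib_left)
  ultimately have "(1 - mux) * A \<le> (1 - mux) * (R + mux / (1 - mux) * (F (z 1) - F xs))"
    by linarith
  then have gap_sum: "A \<le> R + mux / (1 - mux) * (F (z 1) - F xs)"
    using mu by simp
  have "F (gpa_xbar mux z T) = F (\<Sum>t = 1..T. (1 / real T) *\<^sub>R gpa_x mux z t)"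
    by (simp add: gpa_xbar_def scaleR_sum_right)
  also have "\<dots> \<le> (\<Sum>t = 1..T. (1 / real T) * F (gpa_x mux z t))"
    using \<open>1 \<le> T\<close> by (intro convex_on_sum[OF _ _ convex]) auto
  finally have "F (gpa_xbar mux z T) - F xs \<le> A / real T"
    using \<open>1 \<le> T\<close> by (simp add: A_def sum_subtractf sum_divide_distrib[symmetric] field_simps)
  also have "\<dots> \<le> (R + mux / (1 - mux) * (F (z 1) - F xs)) / real T"
    using gap_sum by (simp add: divide_right_mono)
  finally show ?thesis
    unfolding R_def .
qed

lemma nn_integral_le_integral_of_le:
  fixes f h :: "'w \<Rightarrow> real"
  assumes "integrable M h" "\<And>\<omega>. f \<omega> \<le> h \<omega>" "\<And>\<omega>. 0 \<le> h \<omega>"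
  shows "(\<integral>\<^sup>+\<omega>. ennreal (f \<omega>) \<partial>M) \<le> ennreal (integral\<^sup>L M h)"
proof -
  have "(\<integral>\<^sup>+\<omega>. ennreal (f \<omega>) \<partial>M) \<le> (\<integral>\<^sup>+\<omega>. ennreal (h \<omega>) \<partial>M)"
    using assms(2) by (intro nn_integral_mono ennreal_leI)
  also have "\<dots> = ennreal (integral\<^sup>L M h)"
    using assms(1,3) by (intro nn_integral_eq_integral) auto
  finally show ?thesis .
qed

lemma add_mult_sqrt_divide_le:
  fixes a b T :: real
  assumes "1 \<le> T" "0 \<le> b"
  shows "(a * sqrt T + b) / T \<le> (a + b) / sqrt T"
proof -
  have "sqrt T \<le> T"
    using assms(1) real_sqrt_le_mono[of T "T * T"] by (simp add: mult_le_cancel_left1)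
  then have "b / T \<le> b / sqrt T"
    using assms by (intro divide_left_mono) auto
  moreover have "a * sqrt T / T = a / sqrt T"
    using assms(1) by (simp add: real_sqrt_divide[symmetric] field_simps flip: real_sqrt_mult)
  ultimately show ?thesis
    by (simp add: add_divide_distrib)
qed

lemma gpa_expected_gap_le:
  fixes F :: "'v::real_inner \<Rightarrow> real" and z :: "nat \<Rightarrow> 'w \<Rightarrow> 'v"
  assumes convex: "convex_on UNIV F"
    and subgradient: "\<And>x v. F x + g x \<bullet> (v - x) \<le> F v"
    and minimizer: "\<And>x. F xs \<le> F x"
    and mu: "0 \<le> mux" "mux < 1" "0 \<le> muy" "muy < 1"
    and initial_integrable: "integrable M (\<lambda>\<omega>. F (z 1 \<omega>) - F xs)"
    and regret_integrable: "\<And>t. 1 \<le> t \<Longrightarrow>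
      integrable M (\<lambda>\<omega>. g (gpa_y mux muy (\<lambda>s. z s \<omega>) t) \<bullet> (z t \<omega> - xs))"
    and "1 \<le> T"
  shows "(\<integral>\<^sup>+\<omega>. ennreal (F (gpa_xbar mux (\<lambda>s. z s \<omega>) T) - F xs) \<partial>M)
    \<le> ennreal (((\<Sum>t = 1..T. \<integral>\<omega>. g (gpa_y mux muy (\<lambda>s. z s \<omega>) t) \<bullet> (z t \<omega> - xs) \<partial>M)
                + mux / (1 - mux) * (\<integral>\<omega>. F (z 1 \<omega>) - F xs \<partial>M)) / real T)"
proof -
  define r where "r = (\<lambda>t \<omega>. g (gpa_y mux muy (\<lambda>s. z s \<omega>) t) \<bullet> (z t \<omega> - xs))"
  define bound where
    "bound = (\<lambda>\<omega>. ((\<Sum>t = 1..T. r t \<omega>) + mux / (1 - mux) * (F (z 1 \<omega>) - F xs)) / real T)"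
  have gap_le: "F (gpa_xbar mux (\<lambda>s. z s \<omega>) T) - F xs \<le> bound \<omega>" for \<omega>
    unfolding bound_def r_def using convex subgradient minimizer mu \<open>1 \<le> T\<close>
    by (rule gpa_xbar_gap_le)
  have sum_integrable: "integrable M (\<lambda>\<omega>. \<Sum>t = 1..T. r t \<omega>)"
    using regret_integrable by (auto simp: r_def)
  have "integrable M bound"
    unfolding bound_def using sum_integrable initial_integrable by auto
  moreover have "0 \<le> bound \<omega>" for \<omega>
    using gap_le[of \<omega>] minimizer[of "gpa_xbar mux (\<lambda>s. z s \<omega>) T"] by linarith
  ultimately have "(\<integral>\<^sup>+\<omega>. ennreal (F (gpa_xbar mux (\<lambda>s. z s \<omega>) T) - F xs) \<partial>M)
      \<le> ennreal (integral\<^sup>L M bound)"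
    by (rule nn_integral_le_integral_of_le[OF _ gap_le])
  also have "integral\<^sup>L M bound
      = ((\<Sum>t = 1..T. integral\<^sup>L M (r t)) + mux / (1 - mux) * (\<integral>\<omega>. F (z 1 \<omega>) - F xs \<partial>M)) / real T"
    using sum_integrable initial_integrable regret_integrable
    by (simp add: bound_def r_def Bochner_Integration.integral_add Bochner_Integration.integral_sum)
  finally show ?thesis
    unfolding r_def .
qed

theorem corollary1:
  fixes M :: "'w measure"
    and F :: "real ^ 'n \<Rightarrow> real"
    and gradF :: "real ^ 'n \<Rightarrow> real ^ 'n"
    and xs :: "real ^ 'n"
    and z :: "nat \<Rightarrow> 'w \<Rightarrow> real ^ 'n"
    and mux muy :: real
  assumes "prob_space M"
    and "convex_on UNIV F"
    and "\<And>x. (F has_derivative (\<lambda>h. gradF x \<bullet> h)) (at x)"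
    and "\<And>x. F xs \<le> F x"
    and "0 \<le> mux" "mux < 1" "0 \<le> muy" "muy < 1"
    and "\<And>t. z t \<in> borel_measurable M"
    and "integrable M (\<lambda>\<omega>. F (z 1 \<omega>) - F xs)"
    and "\<And>t. t \<ge> 1 \<Longrightarrow> integrable M
           (\<lambda>\<omega>. gradF (gpa_y mux muy (\<lambda>s. z s \<omega>) t) \<bullet> (z t \<omega> - xs))"
    and "(\<lambda>T. \<Sum>t = 1..T. \<integral>\<omega>. gradF (gpa_y mux muy (\<lambda>s. z s \<omega>) t) \<bullet> (z t \<omega> - xs) \<partial>M)
           \<in> O(\<lambda>T. sqrt (real T))"
  shows "\<exists>C. \<forall>\<^sub>F T in sequentially.
           (\<integral>\<^sup>+\<omega>. ennreal (F (gpa_xbar mux (\<lambda>s. z s \<omega>) T) - F xs) \<partial>M)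
             \<le> ennreal (C / sqrt (real T))"
proof -
  have subgradient: "\<And>x v. F x + gradF x \<bullet> (v - x) \<le> F v"
    using assms(2,3) by (rule convex_on_gradient_inequality)
  define initial_gap where "initial_gap = mux / (1 - mux) * (\<integral>\<omega>. F (z 1 \<omega>) - F xs \<partial>M)"
  have "0 \<le> initial_gap"
    using assms(4-6) by (simp add: initial_gap_def)
  from assms(12) obtain c where "\<forall>\<^sub>F T in sequentially.
      norm (\<Sum>t = 1..T. \<integral>\<omega>. gradF (gpa_y mux muy (\<lambda>s. z s \<omega>) t) \<bullet> (z t \<omega> - xs) \<partial>M)
        \<le> c * norm (sqrt (real T))"
    by (elim landau_o.bigE)
  then have "\<forall>\<^sub>F T in sequentially.
      (\<integral>\<^sup>+\<omega>. ennreal (F (gpa_xbar mux (\<lambda>s. z s \<omega>) T) - F xs) \<partial>M)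
        \<le> ennreal ((c + initial_gap) / sqrt (real T))"
    using eventually_ge_at_top[of "1::nat"]
  proof eventually_elim
    case (elim T)
    have "(\<integral>\<^sup>+\<omega>. ennreal (F (gpa_xbar mux (\<lambda>s. z s \<omega>) T) - F xs) \<partial>M)
        \<le> ennreal (((\<Sum>t = 1..T. \<integral>\<omega>. gradF (gpa_y mux muy (\<lambda>s. z s \<omega>) t) \<bullet> (z t \<omega> - xs) \<partial>M) + initial_gap)
                   / real T)"
      unfolding initial_gap_def using assms(2) subgradient assms(4-8,10,11) \<open>1 \<le> T\<close>
      by (rule gpa_expected_gap_le)
    also have "\<dots> \<le> ennreal ((c * sqrt (real T) + initial_gap) / real T)"
      using elim by (intro ennreal_leI divide_right_mono) auto
    also have "\<dots> \<le> ennreal ((c + initial_gap) / sqrt (real T))"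
      using elim \<open>0 \<le> initial_gap\<close> by (intro ennreal_leI add_mult_sqrt_divide_le) auto
    finally show ?case .
  qed
  then show ?thesis
    by blast
qed

end
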